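(* Let $\rho_0$ be a reference probability density on $\mathbb{R}^d$, let $\hat{\mathbf{x}}^{(1)},\dots,\hat{\mathbf{x}}^{(N)}\in\mathbb{R}^d$ be samples from a predictive distribution $\rho_1$, let $\mathbf{z}_0^{(n)}\sim\rho_0$ and set $\mathbf{z}_1^{(n)}=\hat{\mathbf{x}}^{(n)}$, $n\in[N]$. Let $\mathbf{y}$ be an observation and $p(\mathbf{y}\mid\mathbf{x})>0$ a likelihood, and define the likelihood weights $w_n(\mathbf{y})=p(\mathbf{y}\mid\hat{\mathbf{x}}^{(n)})/\sum_{m=1}^N p(\mathbf{y}\mid\hat{\mathbf{x}}^{(m)})$. Let $\sigma_{\min}>0$ and suppose the conditional paths satisfy $p_1(\mathbf{z}\mid\mathbf{z}_0,\mathbf{z}_1)=\mathcal{N}(\mathbf{z}\mid\mathbf{z}_1,\sigma_{\min}^2 I)$ and $p_t(\mathbf{z}\mid\mathbf{z}_0^{(n)},\mathbf{z}_1^{(n)})>0$ for all $t,\mathbf{z},n$. Define the Monte-Carlo-guided vector field $$\mathbf{u}^{\mathrm{MCG}}_t(\mathbf{z};\mathbf{y})=\sum_{n=1}^N w_n'(\mathbf{z};\mathbf{y})\,\mathbf{u}_t(\mathbf{z}\mid\mathbf{z}_0^{(n)},\mathbf{z}_1^{(n)}),\qquad w_n'(\mathbf{z};\mathbf{y})=\frac{p(\mathbf{y}\mid\hat{\mathbf{x}}^{(n)})\,p_t(\mathbf{z}\mid\mathbf{z}_0^{(n)},\mathbf{z}_1^{(n)})}{\sum_{m=1}^N p(\mathbf{y}\mid\hat{\mathbf{x}}^{(m)})\,p_t(\mathbf{z}\mid\mathbf{z}_0^{(m)},\mathbf{z}_1^{(m)})}.$$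 Assume the flow $\boldsymbol\phi^{\mathbf{y}}_t(\cdot;\sigma_{\min})$ of $\mathbf{u}^{\mathrm{MCG}}_t(\cdot;\mathbf{y})$ exists on $[0,1]$ and that $(\boldsymbol\phi^{\mathbf{y}}_t)_\#\rho_0$ is the unique solution, among paths of probability densities, of $\partial_t q_t+\nabla\cdot(q_t\mathbf{u}^{\mathrm{MCG}}_t)=0$, $q_0=\rho_0$. Then $(\boldsymbol\phi^{\mathbf{y}}_t)_\#\rho_0=\sum_{n=1}^N w_n(\mathbf{y})p_t(\cdot\mid\mathbf{z}_0^{(n)},\mathbf{z}_1^{(n)})$, so that $$(\boldsymbol\phi^{\mathbf{y}}_1)_\#\rho_0=\sum_{n=1}^N w_n(\mathbf{y})\,\mathcal{N}(\cdot\mid\hat{\mathbf{x}}^{(n)},\sigma_{\min}^2 I),$$ and as $\sigma_{\min}\to0$ this measure converges weakly to the bootstrap-particle-filter resampling measure $\rho^N_{\mathrm{BPF}}(d\mathbf{z};\mathbf{y})=\sum_{n=1}^N w_n(\mathbf{y})\delta_{\hat{\mathbf{x}}^{(n)}}(d\mathbf{z})$. Equivalently, if $\mathbf{x}_0\sim\rho_0$, then $\boldsymbol\phi^{\mathbf{y}}_1(\mathbf{x}_0;\sigma_{\min})$ converges in distribution, as $\sigma_{\min}\to0$, to a random variable with law $\rho^N_{\mathrm{BPF}}(\cdot;\mathbf{y})$.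
   Context: For each pair $(\mathbf{z}_0,\mathbf{z}_1)$, $\{p_t(\cdot\mid\mathbf{z}_0,\mathbf{z}_1)\}_{t\in[0,1]}$ is a path of probability densities on $\mathbb{R}^d$ and $\mathbf{u}_t(\cdot\mid\mathbf{z}_0,\mathbf{z}_1)$ a time-dependent vector field generating it, i.e. $\partial_t p_t(\mathbf{z}\mid\mathbf{z}_0,\mathbf{z}_1)+\nabla_{\mathbf{z}}\cdot[p_t(\mathbf{z}\mid\mathbf{z}_0,\mathbf{z}_1)\mathbf{u}_t(\mathbf{z}\mid\mathbf{z}_0,\mathbf{z}_1)]=0$ with $p_0(\cdot\mid\mathbf{z}_0,\mathbf{z}_1)=\rho_0$. For a measurable map $T$ and measure $\mu$, $T_\#\mu(B)=\mu(T^{-1}(B))$. Weak convergence means convergence of integrals of all bounded continuous functions. The bootstrap particle filter's analysis step resamples the particles $\hat{\mathbf{x}}^{(n)}$ with probabilities proportional to $p(\mathbf{y}\mid\hat{\mathbf{x}}^{(n)})$, i.e. draws from $\rho^N_{\mathrm{BPF}}$. *)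

theory Defs
  imports "HOL-Probability.Probability"
begin

definition is_density :: "('a::euclidean_space \<Rightarrow> real) \<Rightarrow> bool" where
  "is_density f \<longleftrightarrow> f \<in> borel_measurable lborel \<and> (\<forall>x. 0 \<le> f x)
     \<and> integrable lborel f \<and> integral\<^sup>L lborel f = 1"

definition density_path :: "(real \<Rightarrow> 'a::euclidean_space \<Rightarrow> real) \<Rightarrow> bool" where
  "density_path q \<longleftrightarrow> (\<forall>t\<in>{0..1}. is_density (q t))"

text \<open>Continuity equation  d/dt q_t + div (q_t v_t) = 0  on [0,1] (classical sense);
  the divergence of a differentiable field F at z is the trace of its derivative.\<close>
definition solves_CE :: "(real \<Rightarrow> 'a::euclidean_space \<Rightarrow> real) \<Rightarrow> (real \<Rightarrow> 'a \<Rightarrow> 'a) \<Rightarrow> bool" where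
  "solves_CE q v \<longleftrightarrow> (\<forall>t\<in>{0..1}. \<forall>z. \<exists>dq D.
      ((\<lambda>s. q s z) has_real_derivative dq) (at t within {0..1})
    \<and> ((\<lambda>x. q t x *\<^sub>R v t x) has_derivative D) (at z)
    \<and> dq + (\<Sum>i\<in>Basis. D i \<bullet> i) = 0)"

definition gauss_density :: "'a::euclidean_space \<Rightarrow> real \<Rightarrow> 'a \<Rightarrow> real" where
  "gauss_density m s z = (2 * pi * s\<^sup>2) powr (- real DIM('a) / 2) * exp (- (norm (z - m))\<^sup>2 / (2 * s\<^sup>2))"

definition lik_weight :: "('a \<Rightarrow> real) \<Rightarrow> (nat \<Rightarrow> 'a) \<Rightarrow> nat \<Rightarrow> nat \<Rightarrow> real" where
  "lik_weight L xh N n = L (xh n) / (\<Sum>m\<in>{1..N}. L (xh m))"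

definition mcg_field :: "('a \<Rightarrow> real) \<Rightarrow> (nat \<Rightarrow> 'a) \<Rightarrow> (nat \<Rightarrow> 'a)
    \<Rightarrow> (real \<Rightarrow> 'a \<times> 'a \<Rightarrow> 'a \<Rightarrow> real) \<Rightarrow> (real \<Rightarrow> 'a \<times> 'a \<Rightarrow> 'a \<Rightarrow> 'a::euclidean_space)
    \<Rightarrow> nat \<Rightarrow> real \<Rightarrow> 'a \<Rightarrow> 'a" where
  "mcg_field L z0 xh p u N t z =
     (\<Sum>n\<in>{1..N}. (L (xh n) * p t (z0 n, xh n) z
        / (\<Sum>m\<in>{1..N}. L (xh m) * p t (z0 m, xh m) z)) *\<^sub>R u t (z0 n, xh n) z)"

text \<open>Bootstrap particle filter measure sum_n w_n(y) delta_{xh n}, as the image of the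
  weights on the index set {1..N} under xh.\<close>
definition bpf_measure :: "('a \<Rightarrow> real) \<Rightarrow> (nat \<Rightarrow> 'a::euclidean_space) \<Rightarrow> nat \<Rightarrow> 'a measure" where
  "bpf_measure L xh N =
     distr (density (count_space {1..N}) (\<lambda>n. ennreal (lik_weight L xh N n))) borel xh"

definition weak_conv_at :: "('b \<Rightarrow> 'a::topological_space measure) \<Rightarrow> 'a measure \<Rightarrow> 'b filter \<Rightarrow> bool" where
  "weak_conv_at M \<mu> F \<longleftrightarrow> (\<forall>f::'a \<Rightarrow> real. continuous_on UNIV f \<and> bounded (range f) \<longrightarrow>
      ((\<lambda>s. \<integral>x. f x \<partial>(M s)) \<longlongrightarrow> (\<integral>x. f x \<partial>\<mu>)) F)"

end

(*
  The continuity equation is linear in the flux q_t v_t. Each conditional path p_t(. | z0_n, z1_n)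
  solves it with its own field u_t(. | z0_n, z1_n), and the Monte-Carlo-guided field is precisely
  the field whose flux against the likelihood-weighted mixture P_t = sum_n w_n p_t(. | z0_n, z1_n)
  is sum_n w_n p_t(. | z0_n, z1_n) u_t(. | z0_n, z1_n). Hence P_t solves the continuity equation for
  u^MCG with P_0 = rho0, and uniqueness identifies it with the pushforward of rho0 under the flow.
  At t = 1 the mixture consists of Gaussians of width sigma centred at the particles; as sigma -> 0
  these form an approximate identity, which gives weak convergence to sum_n w_n delta_{xh n}.
*)

theory Submission
  imports Defs
begin

lemma is_density_mixture:
  assumes "finite I" and dens: "\<And>i. i \<in> I \<Longrightarrow> is_density (g i)"
    and w_nonneg: "\<And>i. i \<in> I \<Longrightarrow> 0 \<le> w i" and w_sum: "(\<Sum>i\<in>I. w i) = 1"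
  shows "is_density (\<lambda>x. \<Sum>i\<in>I. w i * g i x)"
  unfolding is_density_def
proof (intro conjI allI)
  have meas: "\<And>i. i \<in> I \<Longrightarrow> g i \<in> borel_measurable lborel"
    and int: "\<And>i. i \<in> I \<Longrightarrow> integrable lborel (g i)"
    and one: "\<And>i. i \<in> I \<Longrightarrow> integral\<^sup>L lborel (g i) = 1"
    using dens unfolding is_density_def by auto
  show "(\<lambda>x. \<Sum>i\<in>I. w i * g i x) \<in> borel_measurable lborel"
    using meas by (intro borel_measurable_sum borel_measurable_times) auto
  show "0 \<le> (\<Sum>i\<in>I. w i * g i x)" for x
    using dens w_nonneg unfolding is_density_def by (intro sum_nonneg) auto
  show "integrable lborel (\<lambda>x. \<Sum>i\<in>I. w i * g i x)"
    using int by auto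
  show "(\<integral>x. (\<Sum>i\<in>I. w i * g i x) \<partial>lborel) = 1"
    using int one w_sum by (simp add: integral_sum)
qed

lemma density_path_mixture:
  assumes "finite I" and "\<And>i. i \<in> I \<Longrightarrow> density_path (q i)"
    and "\<And>i. i \<in> I \<Longrightarrow> 0 \<le> w i" and "(\<Sum>i\<in>I. w i) = 1"
  shows "density_path (\<lambda>t x. \<Sum>i\<in>I. w i * q i t x)"
  using assms unfolding density_path_def by (auto intro!: is_density_mixture)

lemma solves_CE_mixture:
  fixes q :: "'i \<Rightarrow> real \<Rightarrow> 'a::euclidean_space \<Rightarrow> real" and u :: "'i \<Rightarrow> real \<Rightarrow> 'a \<Rightarrow> 'a"
  assumes "finite I" and CE: "\<And>i. i \<in> I \<Longrightarrow> solves_CE (q i) (u i)"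
    and flux: "\<And>t x. t \<in> {0..1} \<Longrightarrow>
      (\<Sum>i\<in>I. w i * q i t x) *\<^sub>R v t x = (\<Sum>i\<in>I. w i *\<^sub>R (q i t x *\<^sub>R u i t x))"
  shows "solves_CE (\<lambda>t x. \<Sum>i\<in>I. w i * q i t x) v"
  unfolding solves_CE_def
proof (intro ballI allI)
  fix t :: real and z assume t: "t \<in> {0..1}"
  have "\<forall>i\<in>I. \<exists>dq D. ((\<lambda>s. q i s z) has_real_derivative dq) (at t within {0..1})
      \<and> ((\<lambda>x. q i t x *\<^sub>R u i t x) has_derivative D) (at z)
      \<and> dq + (\<Sum>j\<in>Basis. D j \<bullet> j) = 0" (is "\<forall>i\<in>I. \<exists>dq D. ?Q i dq D")
    using CE t unfolding solves_CE_def by blast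
  then have "\<exists>dq. \<forall>i\<in>I. \<exists>D. ?Q i (dq i) D"
    by (rule bchoice)
  then obtain dq where "\<forall>i\<in>I. \<exists>D. ?Q i (dq i) D" ..
  then have "\<exists>D. \<forall>i\<in>I. ?Q i (dq i) (D i)"
    by (rule bchoice)
  then obtain D where
    dq: "\<And>i. i \<in> I \<Longrightarrow> ((\<lambda>s. q i s z) has_real_derivative dq i) (at t within {0..1})" and
    D: "\<And>i. i \<in> I \<Longrightarrow> ((\<lambda>x. q i t x *\<^sub>R u i t x) has_derivative D i) (at z)" and
    balance: "\<And>i. i \<in> I \<Longrightarrow> dq i + (\<Sum>j\<in>Basis. D i j \<bullet> j) = 0"
    by blast
  show "\<exists>dq D. ((\<lambda>s. \<Sum>i\<in>I. w i * q i s z) has_real_derivative dq) (at t within {0..1})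
      \<and> ((\<lambda>x. (\<Sum>i\<in>I. w i * q i t x) *\<^sub>R v t x) has_derivative D) (at z)
      \<and> dq + (\<Sum>j\<in>Basis. D j \<bullet> j) = 0"
  proof (intro exI conjI)
    show "((\<lambda>s. \<Sum>i\<in>I. w i * q i s z) has_real_derivative (\<Sum>i\<in>I. w i * dq i)) (at t within {0..1})"
      using dq by (intro DERIV_sum DERIV_cmult) auto
    show "((\<lambda>x. (\<Sum>i\<in>I. w i * q i t x) *\<^sub>R v t x) has_derivative (\<lambda>h. \<Sum>i\<in>I. w i *\<^sub>R D i h)) (at z)"
      unfolding flux[OF t] using D by (intro has_derivative_sum has_derivative_scaleR_right) auto
    have "(\<Sum>i\<in>I. w i * dq i) + (\<Sum>j\<in>Basis. (\<Sum>i\<in>I. w i *\<^sub>R D i j) \<bullet> j)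
        = (\<Sum>i\<in>I. w i * (dq i + (\<Sum>j\<in>Basis. D i j \<bullet> j)))"
      by (simp add: inner_sum_left sum_distrib_left sum.distrib distrib_left sum.swap[of _ Basis])
    also have "\<dots> = 0"
      using balance by simp
    finally show "(\<Sum>i\<in>I. w i * dq i) + (\<Sum>j\<in>Basis. (\<Sum>i\<in>I. w i *\<^sub>R D i j) \<bullet> j) = 0" .
  qed
qed

lemma lik_weight_nonneg:
  "(\<And>m. m \<in> {1..N} \<Longrightarrow> 0 \<le> L (xh m)) \<Longrightarrow> n \<in> {1..N} \<Longrightarrow> 0 \<le> lik_weight L xh N n"
  unfolding lik_weight_def by (intro divide_nonneg_nonneg sum_nonneg) auto

lemma sum_lik_weight:
  assumes "N \<ge> 1" and "\<And>m. m \<in> {1..N} \<Longrightarrow> 0 < L (xh m)"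
  shows "(\<Sum>n\<in>{1..N}. lik_weight L xh N n) = 1"
proof -
  have "(\<Sum>m\<in>{1..N}. L (xh m)) > 0"
    using assms by (intro sum_pos) auto
  then show ?thesis
    unfolding lik_weight_def by (simp flip: sum_divide_distrib)
qed

lemma lik_weight_mixture_flux:
  assumes "(\<Sum>m\<in>{1..N}. L (xh m) * p t (z0 m, xh m) z) \<noteq> 0"
  shows "(\<Sum>n\<in>{1..N}. lik_weight L xh N n * p t (z0 n, xh n) z) *\<^sub>R mcg_field L z0 xh p u N t z
       = (\<Sum>n\<in>{1..N}. lik_weight L xh N n *\<^sub>R (p t (z0 n, xh n) z *\<^sub>R u t (z0 n, xh n) z))"
proof -
  define S where "S = (\<Sum>m\<in>{1..N}. L (xh m) * p t (z0 m, xh m) z)"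
  define SL where "SL = (\<Sum>m\<in>{1..N}. L (xh m))"
  have "(\<Sum>n\<in>{1..N}. lik_weight L xh N n * p t (z0 n, xh n) z) = S / SL"
    unfolding lik_weight_def S_def SL_def by (simp add: sum_divide_distrib)
  then have "(\<Sum>n\<in>{1..N}. lik_weight L xh N n * p t (z0 n, xh n) z) *\<^sub>R mcg_field L z0 xh p u N t z
      = (\<Sum>n\<in>{1..N}. (S / SL * (L (xh n) * p t (z0 n, xh n) z / S)) *\<^sub>R u t (z0 n, xh n) z)"
    unfolding mcg_field_def S_def by (simp add: scaleR_sum_right)
  also have "\<dots> = (\<Sum>n\<in>{1..N}. lik_weight L xh N n *\<^sub>R (p t (z0 n, xh n) z *\<^sub>R u t (z0 n, xh n) z))"
    using assms unfolding S_def SL_def lik_weight_def by (intro sum.cong refl) simp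
  finally show ?thesis .
qed

lemma solves_CE_lik_weight_mixture:
  assumes "N \<ge> 1"
    and CE: "\<And>n. n \<in> {1..N} \<Longrightarrow> solves_CE (\<lambda>t. p t (z0 n, xh n)) (\<lambda>t. u t (z0 n, xh n))"
    and L_pos: "\<And>n. n \<in> {1..N} \<Longrightarrow> 0 < L (xh n)"
    and p_pos: "\<And>t z n. t \<in> {0..1} \<Longrightarrow> n \<in> {1..N} \<Longrightarrow> 0 < p t (z0 n, xh n) z"
  shows "solves_CE (\<lambda>t z. \<Sum>n\<in>{1..N}. lik_weight L xh N n * p t (z0 n, xh n) z) (mcg_field L z0 xh p u N)"
proof (rule solves_CE_mixture)
  fix t :: real and z assume "t \<in> {0..1}"
  then have "(\<Sum>m\<in>{1..N}. L (xh m) * p t (z0 m, xh m) z) > 0"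
    using \<open>N \<ge> 1\<close> L_pos p_pos by (intro sum_pos) auto
  then show "(\<Sum>n\<in>{1..N}. lik_weight L xh N n * p t (z0 n, xh n) z) *\<^sub>R mcg_field L z0 xh p u N t z
      = (\<Sum>n\<in>{1..N}. lik_weight L xh N n *\<^sub>R (p t (z0 n, xh n) z *\<^sub>R u t (z0 n, xh n) z))"
    by (intro lik_weight_mixture_flux) simp
qed (use CE in auto)

lemma unique_CE_solution_eq_lik_weight_mixture:
  fixes \<mu> :: "real \<Rightarrow> 'a::euclidean_space measure"
  assumes "N \<ge> 1" and L_pos: "\<And>n. n \<in> {1..N} \<Longrightarrow> 0 < L (xh n)"
    and paths: "\<And>n. n \<in> {1..N} \<Longrightarrow> density_path (\<lambda>t. p t (z0 n, xh n))"
    and CE: "\<And>n. n \<in> {1..N} \<Longrightarrow> solves_CE (\<lambda>t. p t (z0 n, xh n)) (\<lambda>t. u t (z0 n, xh n))"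
    and start: "\<And>n z. n \<in> {1..N} \<Longrightarrow> p 0 (z0 n, xh n) z = \<rho>0 z"
    and p_pos: "\<And>t z n. t \<in> {0..1} \<Longrightarrow> n \<in> {1..N} \<Longrightarrow> 0 < p t (z0 n, xh n) z"
    and unique: "\<And>q t. density_path q \<Longrightarrow> solves_CE q (mcg_field L z0 xh p u N)
      \<Longrightarrow> (\<forall>z. q 0 z = \<rho>0 z) \<Longrightarrow> t \<in> {0..1} \<Longrightarrow> density lborel (\<lambda>x. ennreal (q t x)) = \<mu> t"
    and t: "t \<in> {0..1}"
  shows "\<mu> t = density lborel (\<lambda>z. ennreal (\<Sum>n\<in>{1..N}. lik_weight L xh N n * p t (z0 n, xh n) z))"
proof -
  have w_sum: "(\<Sum>n\<in>{1..N}. lik_weight L xh N n) = 1"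
    using \<open>N \<ge> 1\<close> L_pos by (rule sum_lik_weight)
  have "density_path (\<lambda>t z. \<Sum>n\<in>{1..N}. lik_weight L xh N n * p t (z0 n, xh n) z)"
    using paths L_pos w_sum by (intro density_path_mixture lik_weight_nonneg less_imp_le) auto
  moreover have "solves_CE (\<lambda>t z. \<Sum>n\<in>{1..N}. lik_weight L xh N n * p t (z0 n, xh n) z)
      (mcg_field L z0 xh p u N)"
    using \<open>N \<ge> 1\<close> CE L_pos p_pos by (rule solves_CE_lik_weight_mixture)
  moreover have "\<forall>z. (\<Sum>n\<in>{1..N}. lik_weight L xh N n * p 0 (z0 n, xh n) z) = \<rho>0 z"
    using start w_sum by (simp flip: sum_distrib_right)
  ultimately have "density lborel (\<lambda>z. ennreal (\<Sum>n\<in>{1..N}. lik_weight L xh N n * p t (z0 n, xh n) z)) = \<mu> t"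
    using t by (rule unique)
  then show ?thesis ..
qed

lemma integrable_mult_bounded:
  fixes g f :: "'a \<Rightarrow> real"
  assumes g: "integrable M g" and f: "f \<in> borel_measurable M" and f_bdd: "\<And>x. \<bar>f x\<bar> \<le> B"
  shows "integrable M (\<lambda>x. g x * f x)"
proof (rule Bochner_Integration.integrable_bound[OF integrable_mult_right[OF integrable_abs[OF g], of B]])
  show "(\<lambda>x. g x * f x) \<in> borel_measurable M"
    using borel_measurable_integrable[OF g] f by simp
  have "\<bar>g x\<bar> * \<bar>f x\<bar> \<le> \<bar>g x\<bar> * \<bar>B\<bar>" for x
    using f_bdd[of x] by (intro mult_left_mono) auto
  then show "AE x in M. norm (g x * f x) \<le> norm (B * \<bar>g x\<bar>)"
    by (simp add: abs_mult mult.commute)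
qed

lemma integral_density_mixture:
  fixes f :: "'a::euclidean_space \<Rightarrow> real"
  assumes "finite I" and dens: "\<And>i. i \<in> I \<Longrightarrow> is_density (g i)" and w_nonneg: "\<And>i. i \<in> I \<Longrightarrow> 0 \<le> w i"
    and f_meas: "f \<in> borel_measurable borel" and f_bdd: "\<And>z. \<bar>f z\<bar> \<le> B"
  shows "(\<integral>z. f z \<partial>density lborel (\<lambda>z. ennreal (\<Sum>i\<in>I. w i * g i z)))
       = (\<Sum>i\<in>I. w i * (\<integral>z. g i z * f z \<partial>lborel))"
proof -
  have meas: "\<And>i. i \<in> I \<Longrightarrow> g i \<in> borel_measurable lborel"
    and nonneg: "\<And>i z. i \<in> I \<Longrightarrow> 0 \<le> g i z"
    and int_g: "\<And>i. i \<in> I \<Longrightarrow> integrable lborel (g i)"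
    using dens unfolding is_density_def by auto
  have int: "integrable lborel (\<lambda>z. g i z * f z)" if "i \<in> I" for i
    using int_g[OF that] f_meas by (intro integrable_mult_bounded[OF _ _ f_bdd]) simp_all
  have "(\<integral>z. f z \<partial>density lborel (\<lambda>z. ennreal (\<Sum>i\<in>I. w i * g i z)))
      = (\<integral>z. (\<Sum>i\<in>I. w i * g i z) *\<^sub>R f z \<partial>lborel)"
    using f_meas meas nonneg w_nonneg by (intro integral_density) (auto intro!: sum_nonneg)
  also have "\<dots> = (\<integral>z. (\<Sum>i\<in>I. w i * (g i z * f z)) \<partial>lborel)"
    by (simp add: sum_distrib_right mult.assoc)
  also have "\<dots> = (\<Sum>i\<in>I. w i * (\<integral>z. g i z * f z \<partial>lborel))"
    using int by (simp add: integral_sum)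
  finally show ?thesis .
qed

lemma integral_distr_density_count_space:
  fixes f :: "'a::topological_space \<Rightarrow> real"
  assumes "finite I" and w_nonneg: "\<And>i. i \<in> I \<Longrightarrow> 0 \<le> w i" and f_meas: "f \<in> borel_measurable borel"
  shows "(\<integral>z. f z \<partial>distr (density (count_space I) (\<lambda>i. ennreal (w i))) borel x) = (\<Sum>i\<in>I. w i * f (x i))"
proof -
  have "(\<integral>z. f z \<partial>distr (density (count_space I) (\<lambda>i. ennreal (w i))) borel x)
      = (\<integral>i. f (x i) \<partial>density (count_space I) (\<lambda>i. ennreal (w i)))"
    using f_meas by (intro integral_distr) auto
  also have "\<dots> = (\<integral>i. w i *\<^sub>R f (x i) \<partial>count_space I)"
    using w_nonneg by (intro integral_density) auto
  also have "\<dots> = (\<Sum>i\<in>I. w i * f (x i))"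
    using \<open>finite I\<close> by (simp add: lebesgue_integral_count_space_finite)
  finally show ?thesis .
qed

lemma weak_conv_at_transform_eventually:
  fixes M M' :: "'b \<Rightarrow> 'a::topological_space measure"
  assumes "weak_conv_at M \<mu> F" and "eventually (\<lambda>s. M s = M' s) F"
  shows "weak_conv_at M' \<mu> F"
  unfolding weak_conv_at_def
proof (intro allI impI)
  fix f :: "'a \<Rightarrow> real" assume "continuous_on UNIV f \<and> bounded (range f)"
  with assms(1) have "((\<lambda>s. \<integral>x. f x \<partial>M s) \<longlongrightarrow> (\<integral>x. f x \<partial>\<mu>)) F"
    unfolding weak_conv_at_def by blast
  then show "((\<lambda>s. \<integral>x. f x \<partial>M' s) \<longlongrightarrow> (\<integral>x. f x \<partial>\<mu>)) F"
    by (rule Lim_transform_eventually) (use assms(2) in \<open>auto elim: eventually_mono\<close>)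
qed

lemma approx_identity_tendsto:
  fixes g :: "'b \<Rightarrow> 'a::euclidean_space \<Rightarrow> real" and f :: "'a \<Rightarrow> real"
  assumes dens: "eventually (\<lambda>s. is_density (g s)) F"
    and h: "integrable lborel h" "\<And>z. 0 \<le> h z"
    and conc: "\<And>\<delta>. \<delta> > 0 \<Longrightarrow> \<exists>K. (K \<longlongrightarrow> 0) F
                 \<and> eventually (\<lambda>s. \<forall>z. \<delta> \<le> dist z m \<longrightarrow> g s z \<le> K s * h z) F"
    and f_meas: "f \<in> borel_measurable borel" and f_bdd: "\<And>z. \<bar>f z\<bar> \<le> B" and f_cont: "isCont f m"
  shows "((\<lambda>s. \<integral>z. g s z * f z \<partial>lborel) \<longlongrightarrow> f m) F"
proof (rule tendstoI)
  fix \<epsilon> :: real assume \<epsilon>: "\<epsilon> > 0"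
  obtain \<delta> where \<delta>: "\<delta> > 0" and near: "\<And>z. dist z m < \<delta> \<Longrightarrow> \<bar>f z - f m\<bar> < \<epsilon> / 2"
    using f_cont \<epsilon> unfolding continuous_at_eps_delta dist_real_def by (metis half_gt_zero)
  obtain K where "(K \<longlongrightarrow> 0) F" and far: "eventually (\<lambda>s. \<forall>z. \<delta> \<le> dist z m \<longrightarrow> g s z \<le> K s * h z) F"
    using conc[OF \<delta>] by blast
  then have "((\<lambda>s. 2 * B * \<bar>K s\<bar> * integral\<^sup>L lborel h) \<longlongrightarrow> 2 * B * 0 * integral\<^sup>L lborel h) F"
    by (intro tendsto_intros tendsto_rabs_zero)
  then have small: "eventually (\<lambda>s. 2 * B * \<bar>K s\<bar> * integral\<^sup>L lborel h < \<epsilon> / 2) F"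
    using \<epsilon> by (intro order_tendstoD(2)) auto
  show "eventually (\<lambda>s. dist (\<integral>z. g s z * f z \<partial>lborel) (f m) < \<epsilon>) F"
    using dens far small
  proof eventually_elim
    case (elim s)
    then have g_int: "integrable lborel (g s)" and g_nonneg: "\<And>z. 0 \<le> g s z"
      and g_one: "integral\<^sup>L lborel (g s) = 1"
      unfolding is_density_def by auto
    have gf_int: "integrable lborel (\<lambda>z. g s z * f z)"
      using f_meas by (intro integrable_mult_bounded[OF g_int _ f_bdd]) simp
    have bound: "\<bar>g s z * (f z - f m)\<bar> \<le> \<epsilon> / 2 * g s z + 2 * B * \<bar>K s\<bar> * h z" for z
    proof (cases "dist z m < \<delta>")
      case True
      then have "g s z * \<bar>f z - f m\<bar> \<le> g s z * (\<epsilon> / 2)"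
        using near[of z] g_nonneg[of z] by (intro mult_left_mono) auto
      then have "\<bar>g s z * (f z - f m)\<bar> \<le> \<epsilon> / 2 * g s z"
        using g_nonneg[of z] by (simp add: abs_mult mult.commute)
      moreover have "0 \<le> 2 * B * \<bar>K s\<bar> * h z"
        using f_bdd[of z] h(2)[of z] by simp
      ultimately show ?thesis by linarith
    next
      case False
      then have "g s z \<le> \<bar>K s\<bar> * h z"
        using elim h(2)[of z] by (meson abs_ge_self mult_right_mono not_le order_trans)
      moreover have "\<bar>f z - f m\<bar> \<le> 2 * B"
        using f_bdd[of z] f_bdd[of m] by linarith
      ultimately have "\<bar>g s z * (f z - f m)\<bar> \<le> \<bar>K s\<bar> * h z * (2 * B)"
        using g_nonneg[of z] by (simp add: abs_mult mult_mono)
      moreover have "0 \<le> \<epsilon> / 2 * g s z"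
        using \<epsilon> g_nonneg[of z] by simp
      ultimately show ?thesis by (simp add: mult_ac)
    qed
    have "\<bar>(\<integral>z. g s z * f z \<partial>lborel) - f m\<bar> = \<bar>\<integral>z. g s z * (f z - f m) \<partial>lborel\<bar>"
      using gf_int g_int g_one by (simp add: right_diff_distrib)
    also have "\<dots> \<le> (\<integral>z. \<epsilon> / 2 * g s z + 2 * B * \<bar>K s\<bar> * h z \<partial>lborel)"
      using gf_int g_int h bound by (intro integral_abs_bound_integral) (auto simp: right_diff_distrib)
    also have "\<dots> = \<epsilon> / 2 + 2 * B * \<bar>K s\<bar> * integral\<^sup>L lborel h"
      using g_int g_one h by simp
    also have "\<dots> < \<epsilon>"
      using elim by simp
    finally show ?case
      by (simp add: dist_real_def)
  qed
qed

lemma power_div_le_exp: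
  assumes "0 \<le> y"
  shows "(y / real n) ^ n \<le> exp y"
proof (cases "n = 0")
  case False
  have "(y / real n) ^ n \<le> (1 + y / real n) ^ n"
    using assms by (intro power_mono) auto
  also have "\<dots> \<le> exp y"
    using assms False by (intro exp_ge_one_plus_x_over_n_power_n) auto
  finally show ?thesis .
qed (use assms in simp)

lemma exp_neg_div_square_le:
  assumes "0 < s" "0 < e"
  shows "exp (- e / s\<^sup>2) \<le> (real n / e) ^ n * s ^ (2 * n)"
proof -
  have pos: "0 < (e / s\<^sup>2 / real n) ^ n"
    using assms by (cases "n = 0") simp_all
  have "exp (- e / s\<^sup>2) = inverse (exp (e / s\<^sup>2))"
    by (simp add: exp_minus)
  also have "\<dots> \<le> inverse ((e / s\<^sup>2 / real n) ^ n)"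
    using assms pos power_div_le_exp[of "e / s\<^sup>2" n] by (intro le_imp_inverse_le) simp_all
  also have "\<dots> = (real n / e) ^ n * s ^ (2 * n)"
    by (simp add: power_inverse[symmetric] power_mult_distrib power_divide power_mult)
  finally show ?thesis .
qed

lemma gauss_density_eq:
  fixes m z :: "'a::euclidean_space"
  assumes "0 < s"
  shows "gauss_density m s z
       = (2 * pi) powr (- real DIM('a) / 2) / s ^ DIM('a) * exp (- (norm (z - m))\<^sup>2 / (2 * s\<^sup>2))"
proof -
  define d where "d = real DIM('a)"
  have "(2 * pi * s\<^sup>2) powr (- d / 2) = (2 * pi) powr (- d / 2) * (s\<^sup>2) powr (- d / 2)"
    by (simp add: powr_mult)
  also have "(s\<^sup>2) powr (- d / 2) = (s powr 2) powr (- d / 2)"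
    using assms by (simp add: powr_numeral)
  also have "\<dots> = 1 / s powr d"
    by (simp add: powr_powr powr_minus_divide)
  also have "s powr d = s ^ DIM('a)"
    unfolding d_def using assms by (rule powr_realpow)
  finally show ?thesis
    unfolding gauss_density_def d_def by simp
qed

lemma gauss_density_le_tail:
  fixes m z :: "'a::euclidean_space"
  assumes s: "0 < s" "s < 1" and \<delta>: "0 < \<delta>" "\<delta> \<le> norm (z - m)"
  shows "gauss_density m s z
       \<le> (2 * real DIM('a) / \<delta>\<^sup>2) ^ DIM('a) * s ^ DIM('a) * exp (\<delta>\<^sup>2 / 2) * gauss_density m 1 z"
proof -
  define d where "d = DIM('a)"
  define c where "c = (2 * pi) powr (- real d / 2)"
  define R where "R = (norm (z - m))\<^sup>2"
  have "\<delta>\<^sup>2 \<le> R"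
    unfolding R_def using \<delta> by (simp add: power_mono)
  moreover have "1 / 2 \<le> 1 / (2 * s\<^sup>2)"
    using s by (simp add: field_simps power_le_one)
  ultimately have "0 \<le> (R - \<delta>\<^sup>2) * (1 / (2 * s\<^sup>2) - 1 / 2)"
    by simp
  then have "exp (- R / (2 * s\<^sup>2)) \<le> exp (- (\<delta>\<^sup>2 / 2) / s\<^sup>2) * exp (\<delta>\<^sup>2 / 2) * exp (- R / 2)"
    by (simp add: algebra_simps diff_divide_distrib flip: exp_add)
  also have "\<dots> \<le> ((2 * real d / \<delta>\<^sup>2) ^ d * s ^ (2 * d)) * exp (\<delta>\<^sup>2 / 2) * exp (- R / 2)"
  proof -
    have "real d / (\<delta>\<^sup>2 / 2) = 2 * real d / \<delta>\<^sup>2"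
      by simp
    then show ?thesis
      using exp_neg_div_square_le[of s "\<delta>\<^sup>2 / 2" d] s \<delta> by (intro mult_right_mono) (simp_all add: mult.commute)
  qed
  finally have "c / s ^ d * exp (- R / (2 * s\<^sup>2))
      \<le> c / s ^ d * ((2 * real d / \<delta>\<^sup>2) ^ d * s ^ (2 * d) * exp (\<delta>\<^sup>2 / 2) * exp (- R / 2))"
    unfolding c_def using s by (intro mult_left_mono) auto
  also have "\<dots> = (2 * real d / \<delta>\<^sup>2) ^ d * s ^ d * exp (\<delta>\<^sup>2 / 2) * (c * exp (- R / 2))"
    using s by (simp add: power_mult power2_eq_square power_mult_distrib)
  finally show ?thesis
    using gauss_density_eq[where s = 1 and m = m and z = z]
    unfolding gauss_density_eq[OF s(1)] c_def R_def d_def by simp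
qed

(* The normalisation of the Gaussian is a hypothesis here; in the theorem it is inherited from
   the conditional paths at t = 1. *)
lemma tendsto_integral_gauss_density_mult:
  fixes m :: "'a::euclidean_space" and f :: "'a \<Rightarrow> real"
  assumes gauss: "\<And>s. 0 < s \<Longrightarrow> is_density (gauss_density m s)"
    and f_meas: "f \<in> borel_measurable borel" and f_bdd: "\<And>z. \<bar>f z\<bar> \<le> B" and f_cont: "isCont f m"
  shows "((\<lambda>s. \<integral>z. gauss_density m s z * f z \<partial>lborel) \<longlongrightarrow> f m) (at_right 0)"
proof (rule approx_identity_tendsto[OF _ _ _ _ f_meas f_bdd f_cont])
  show "eventually (\<lambda>s. is_density (gauss_density m s)) (at_right 0)"
    using eventually_at_right_less by (rule eventually_mono) (rule gauss)
  show "integrable lborel (gauss_density m 1)" "\<And>z. 0 \<le> gauss_density m 1 z"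
    using gauss[of 1] unfolding is_density_def by auto
next
  fix \<delta> :: real assume \<delta>: "0 < \<delta>"
  define d where "d = DIM('a)"
  define K where "K s = (2 * real d / \<delta>\<^sup>2) ^ d * s ^ d * exp (\<delta>\<^sup>2 / 2)" for s :: real
  have "(K \<longlongrightarrow> (2 * real d / \<delta>\<^sup>2) ^ d * 0 ^ d * exp (\<delta>\<^sup>2 / 2)) (at_right 0)"
    unfolding K_def by (intro tendsto_intros)
  then have "(K \<longlongrightarrow> 0) (at_right 0)"
    by (simp add: d_def zero_power[OF DIM_positive])
  moreover have "eventually (\<lambda>s. \<forall>z. \<delta> \<le> dist z m \<longrightarrow> gauss_density m s z \<le> K s * gauss_density m 1 z)
      (at_right 0)"
    by (rule eventually_at_rightI[of 0 1])
      (use \<delta> in \<open>auto simp: K_def d_def dist_norm intro!: gauss_density_le_tail\<close>)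
  ultimately show "\<exists>K. (K \<longlongrightarrow> 0) (at_right 0)
      \<and> eventually (\<lambda>s. \<forall>z. \<delta> \<le> dist z m \<longrightarrow> gauss_density m s z \<le> K s * gauss_density m 1 z) (at_right 0)"
    by blast
qed

lemma weak_conv_gauss_mixture:
  fixes x :: "'i \<Rightarrow> 'a::euclidean_space"
  assumes "finite I" and w_nonneg: "\<And>i. i \<in> I \<Longrightarrow> 0 \<le> w i"
    and gauss: "\<And>(m :: 'a) s. 0 < s \<Longrightarrow> is_density (gauss_density m s)"
  shows "weak_conv_at (\<lambda>s. density lborel (\<lambda>z. ennreal (\<Sum>i\<in>I. w i * gauss_density (x i) s z)))
           (distr (density (count_space I) (\<lambda>i. ennreal (w i))) borel x) (at_right 0)"
  unfolding weak_conv_at_def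
proof (intro allI impI)
  fix f :: "'a \<Rightarrow> real" assume "continuous_on UNIV f \<and> bounded (range f)"
  then have f_cont: "\<And>z. isCont f z" and f_meas: "f \<in> borel_measurable borel"
    and "bounded (range f)"
    by (auto simp: continuous_on_eq_continuous_at borel_measurable_continuous_onI)
  then obtain B where f_bdd: "\<And>z. \<bar>f z\<bar> \<le> B"
    unfolding bounded_iff by auto
  have "((\<lambda>s. \<Sum>i\<in>I. w i * (\<integral>z. gauss_density (x i) s z * f z \<partial>lborel))
      \<longlongrightarrow> (\<Sum>i\<in>I. w i * f (x i))) (at_right 0)"
    using gauss f_meas f_bdd f_cont
    by (intro tendsto_sum tendsto_mult_left tendsto_integral_gauss_density_mult) auto
  moreover have "eventually (\<lambda>s. (\<Sum>i\<in>I. w i * (\<integral>z. gauss_density (x i) s z * f z \<partial>lborel))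
      = (\<integral>z. f z \<partial>density lborel (\<lambda>z. ennreal (\<Sum>i\<in>I. w i * gauss_density (x i) s z)))) (at_right 0)"
    using eventually_at_right_less
    by (rule eventually_mono)
      (simp add: integral_density_mixture[OF \<open>finite I\<close> _ w_nonneg f_meas f_bdd] gauss)
  ultimately show "((\<lambda>s. \<integral>z. f z \<partial>density lborel (\<lambda>z. ennreal (\<Sum>i\<in>I. w i * gauss_density (x i) s z)))
      \<longlongrightarrow> (\<integral>z. f z \<partial>distr (density (count_space I) (\<lambda>i. ennreal (w i))) borel x)) (at_right 0)"
    using \<open>finite I\<close> w_nonneg f_meas
    by (simp add: integral_distr_density_count_space Lim_transform_eventually)
qed

theorem theorem4p3:
  fixes \<rho>0 :: "'a::euclidean_space \<Rightarrow> real"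
    and N :: nat
    and xh z0 :: "nat \<Rightarrow> 'a"
    and lik :: "'b \<Rightarrow> 'a \<Rightarrow> real" and y :: 'b
    and p :: "real \<Rightarrow> real \<Rightarrow> 'a \<times> 'a \<Rightarrow> 'a \<Rightarrow> real"
    and u :: "real \<Rightarrow> real \<Rightarrow> 'a \<times> 'a \<Rightarrow> 'a \<Rightarrow> 'a"
    and \<phi> :: "real \<Rightarrow> real \<Rightarrow> 'a \<Rightarrow> 'a"
  assumes N_pos: "N \<ge> 1"
    and ref: "is_density \<rho>0"
    and lik_pos: "\<forall>x. lik y x > 0"
    and path_dens: "\<forall>\<sigma>>0. \<forall>c. density_path (\<lambda>t. p \<sigma> t c)"
    and path_CE: "\<forall>\<sigma>>0. \<forall>c. solves_CE (\<lambda>t. p \<sigma> t c) (\<lambda>t. u \<sigma> t c)"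
    and path_0: "\<forall>\<sigma>>0. \<forall>c z. p \<sigma> 0 c z = \<rho>0 z"
    and path_1: "\<forall>\<sigma>>0. \<forall>c z. p \<sigma> 1 c z = gauss_density (snd c) \<sigma> z"
    and path_pos: "\<forall>\<sigma>>0. \<forall>t\<in>{0..1}. \<forall>z. \<forall>n\<in>{1..N}. p \<sigma> t (z0 n, xh n) z > 0"
    and flow: "\<forall>\<sigma>>0. \<forall>z. \<phi> \<sigma> 0 z = z \<and> (\<forall>t\<in>{0..1}.
        ((\<lambda>s. \<phi> \<sigma> s z) has_vector_derivative
           mcg_field (lik y) z0 xh (p \<sigma>) (u \<sigma>) N t (\<phi> \<sigma> t z)) (at t within {0..1}))"
    and flow_meas: "\<forall>\<sigma>>0. \<forall>t\<in>{0..1}. \<phi> \<sigma> t \<in> borel_measurable borel"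
    and push_sol: "\<forall>\<sigma>>0. \<exists>q. density_path q
        \<and> solves_CE q (mcg_field (lik y) z0 xh (p \<sigma>) (u \<sigma>) N) \<and> (\<forall>z. q 0 z = \<rho>0 z)
        \<and> (\<forall>t\<in>{0..1}. distr (density lborel (\<lambda>x. ennreal (\<rho>0 x))) lborel (\<phi> \<sigma> t)
                        = density lborel (\<lambda>x. ennreal (q t x)))"
    and push_unique: "\<forall>\<sigma>>0. \<forall>q. density_path q
        \<and> solves_CE q (mcg_field (lik y) z0 xh (p \<sigma>) (u \<sigma>) N) \<and> (\<forall>z. q 0 z = \<rho>0 z)
        \<longrightarrow> (\<forall>t\<in>{0..1}. density lborel (\<lambda>x. ennreal (q t x))
                 = distr (density lborel (\<lambda>x. ennreal (\<rho>0 x))) lborel (\<phi> \<sigma> t))"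
  shows "(\<forall>\<sigma>>0. \<forall>t\<in>{0..1}.
            distr (density lborel (\<lambda>x. ennreal (\<rho>0 x))) lborel (\<phi> \<sigma> t)
          = density lborel (\<lambda>z. ennreal (\<Sum>n\<in>{1..N}. lik_weight (lik y) xh N n * p \<sigma> t (z0 n, xh n) z)))
       \<and> (\<forall>\<sigma>>0.
            distr (density lborel (\<lambda>x. ennreal (\<rho>0 x))) lborel (\<phi> \<sigma> 1)
          = density lborel (\<lambda>z. ennreal (\<Sum>n\<in>{1..N}. lik_weight (lik y) xh N n * gauss_density (xh n) \<sigma> z)))
       \<and> weak_conv_at (\<lambda>\<sigma>. distr (density lborel (\<lambda>x. ennreal (\<rho>0 x))) lborel (\<phi> \<sigma> 1))
                      (bpf_measure (lik y) xh N) (at_right 0)"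
proof -
  let ?w = "lik_weight (lik y) xh N"
  let ?push = "\<lambda>\<sigma> t. distr (density lborel (\<lambda>x. ennreal (\<rho>0 x))) lborel (\<phi> \<sigma> t)"
  have mixture: "?push \<sigma> t = density lborel (\<lambda>z. ennreal (\<Sum>n\<in>{1..N}. ?w n * p \<sigma> t (z0 n, xh n) z))"
    if \<sigma>: "\<sigma> > 0" and t: "t \<in> {0..1}" for \<sigma> t :: real
  proof (rule unique_CE_solution_eq_lik_weight_mixture[where p = "p \<sigma>" and u = "u \<sigma>"])
    fix q and s :: real assume "density_path q" "solves_CE q (mcg_field (lik y) z0 xh (p \<sigma>) (u \<sigma>) N)"
      "\<forall>z. q 0 z = \<rho>0 z" "s \<in> {0..1}"
    then show "density lborel (\<lambda>x. ennreal (q s x)) = ?push \<sigma> s"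
      using push_unique \<sigma> by blast
  qed (use N_pos lik_pos path_dens path_CE path_0 path_pos \<sigma> t in auto)
  have at_one: "?push \<sigma> 1 = density lborel (\<lambda>z. ennreal (\<Sum>n\<in>{1..N}. ?w n * gauss_density (xh n) \<sigma> z))"
    if "\<sigma> > 0" for \<sigma>
    using mixture[OF that] path_1 that by simp
  have gauss: "is_density (gauss_density m \<sigma>)" if "\<sigma> > 0" for m :: 'a and \<sigma>
  proof -
    have "is_density (p \<sigma> 1 (m, m))"
      using path_dens that unfolding density_path_def by simp
    moreover have "p \<sigma> 1 (m, m) = gauss_density m \<sigma>"
      using path_1 that by auto
    ultimately show ?thesis
      by simp
  qed
  have "weak_conv_at (\<lambda>\<sigma>. ?push \<sigma> 1) (bpf_measure (lik y) xh N) (at_right 0)"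
    unfolding bpf_measure_def using lik_pos
    by (intro weak_conv_at_transform_eventually[OF weak_conv_gauss_mixture[OF _ _ gauss]]
        lik_weight_nonneg less_imp_le eventually_mono[OF eventually_at_right_less])
      (auto simp: at_one)
  then show ?thesis
    using mixture at_one by blast
qed

end
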